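(* Let $\mathcal{X}$ be a finite set and $\underline{Q}$ a lower transition rate operator on $\mathcal{L}(\mathcal{X})$. Let $f\in\mathcal{L}(\mathcal{X})$ and $x\in\mathcal{X}$ be such that $f(x)>\min f$. Then $\underline{T}_tf(x)>\min f$ for all $t\ge0$.
   Context: $\mathcal{L}(\mathcal{X})$ is the set of real-valued functions on $\mathcal{X}$ with pointwise operations and order, real constants identified with constant functions, $\mathbb{I}_y$ the indicator of $\{y\}$. A lower transition rate operator is a map $\underline{Q}\colon\mathcal{L}(\mathcal{X})\to\mathcal{L}(\mathcal{X})$ such that for all $f,g$, $\lambda\ge0$, $\mu\in\mathbb{R}$, $x,y\in\mathcal{X}$: $\underline{Q}(\mu)=0$; $\underline{Q}(f+g)\ge\underline{Q}f+\underline{Q}g$; $\underline{Q}(\lambda f)=\lambda\underline{Q}f$; $x\ne y\Rightarrow\underline{Q}(\mathbb{I}_y)(x)\ge0$. For each $f$, $t\mapsto\underline{T}_tf$ is the unique solution on $[0,\infty)$ of $\frac{d}{dt}\underline{T}_tf=\underline{Q}\,\underline{T}_tf$ with $\underline{T}_0f=f$ (existence and uniqueness are known). *)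

theory Defs
  imports "HOL-Analysis.Analysis"
begin

definition lower_rate_op :: "(('x::finite \<Rightarrow> real) \<Rightarrow> ('x \<Rightarrow> real)) \<Rightarrow> bool" where
  "lower_rate_op Q \<longleftrightarrow>
     (\<forall>\<mu>::real. Q (\<lambda>_. \<mu>) = (\<lambda>_. 0)) \<and>
     (\<forall>f g x. Q (\<lambda>y. f y + g y) x \<ge> Q f x + Q g x) \<and>
     (\<forall>(l::real) f x. l \<ge> 0 \<longrightarrow> Q (\<lambda>y. l * f y) x = l * Q f x) \<and>
     (\<forall>x y. x \<noteq> y \<longrightarrow> Q (indicator {y}) x \<ge> 0)"

definition is_lower_semigroup_sol ::
  "(('x::finite \<Rightarrow> real) \<Rightarrow> ('x \<Rightarrow> real)) \<Rightarrow> ('x \<Rightarrow> real) \<Rightarrow> (real \<Rightarrow> 'x \<Rightarrow> real) \<Rightarrow> bool" where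
  "is_lower_semigroup_sol Q f T \<longleftrightarrow>
     T 0 = f \<and>
     (\<forall>t\<ge>0. \<forall>x. ((\<lambda>s. T s x) has_real_derivative Q (T t) x) (at t within {0..}))"

end

theory Submission
  imports Defs
begin

text \<open>Writing \<open>g \<ge> m\<close> as \<open>m + (\<Sum>y. (g y - m) \<cdot> indicator {y})\<close>, superadditivity, homogeneity
  and the nonnegative off-diagonal rates give \<open>Q g x \<ge> q (g x - m)\<close> with \<open>q = Q (indicator {x}) x\<close>;
  in particular \<open>Q g x \<ge> 0\<close> wherever \<open>g\<close> is minimal. A barrier argument turns the latter into
  \<open>T t \<ge> min f\<close>; then the former gives \<open>(T t x - min f)' \<ge> q (T t x - min f)\<close>, so by Gronwall
  \<open>T t x - min f \<ge> exp (q t) (f x - min f) > 0\<close>.\<close>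

lemma lower_rate_op_const:
  "lower_rate_op Q \<Longrightarrow> Q (\<lambda>_. c) x = 0"
  unfolding lower_rate_op_def by metis

lemma lower_rate_op_superadditive:
  "lower_rate_op Q \<Longrightarrow> Q (\<lambda>y. f y + g y) x \<ge> Q f x + Q g x"
  unfolding lower_rate_op_def by blast

lemma lower_rate_op_positively_homogeneous:
  "lower_rate_op Q \<Longrightarrow> l \<ge> 0 \<Longrightarrow> Q (\<lambda>y. l * f y) x = l * Q f x"
  unfolding lower_rate_op_def by blast

lemma lower_rate_op_offdiag_nonneg:
  "lower_rate_op Q \<Longrightarrow> x \<noteq> y \<Longrightarrow> Q (indicator {y}) x \<ge> 0"
  unfolding lower_rate_op_def by blast

lemma lower_rate_op_sum_ge:
  assumes Q: "lower_rate_op Q" and "finite A"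
  shows "Q (\<lambda>z. \<Sum>i\<in>A. g i z) x \<ge> (\<Sum>i\<in>A. Q (g i) x)"
  using \<open>finite A\<close>
proof (induction A rule: finite_induct)
  case empty
  then show ?case using lower_rate_op_const[OF Q] by simp
next
  case (insert a A)
  have "Q (\<lambda>z. \<Sum>i\<in>insert a A. g i z) x = Q (\<lambda>z. g a z + (\<Sum>i\<in>A. g i z)) x"
    using insert.hyps by simp
  also have "\<dots> \<ge> Q (g a) x + Q (\<lambda>z. \<Sum>i\<in>A. g i z) x"
    by (rule lower_rate_op_superadditive[OF Q])
  finally show ?case using insert by simp
qed

lemma lower_rate_op_ge_diagonal:
  fixes Q :: "('x::finite \<Rightarrow> real) \<Rightarrow> ('x \<Rightarrow> real)"
  assumes Q: "lower_rate_op Q" and ge: "\<And>z. g z \<ge> m"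
  shows "Q g x \<ge> Q (indicator {x}) x * (g x - m)"
proof -
  define h where "h z = g z - m" for z
  have h_nonneg: "h y \<ge> 0" for y using ge by (simp add: h_def)
  have h_expand: "h = (\<lambda>z. \<Sum>y\<in>UNIV. h y * indicator {y} z)"
    by (simp add: fun_eq_iff indicator_def eq_commute[of _ "h _"])
  have "Q h x \<le> Q g x"
  proof -
    have "Q (\<lambda>_. m) x + Q h x \<le> Q (\<lambda>z. m + h z) x"
      by (rule lower_rate_op_superadditive[OF Q])
    then show ?thesis using lower_rate_op_const[OF Q] by (simp add: h_def)
  qed
  have "h x * Q (indicator {x}) x
      \<le> h x * Q (indicator {x}) x + (\<Sum>y\<in>UNIV - {x}. h y * Q (indicator {y}) x)"
    using lower_rate_op_offdiag_nonneg[OF Q] h_nonneg by (intro add_increasing2 sum_nonneg) auto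
  also have "\<dots> = (\<Sum>y\<in>UNIV. Q (\<lambda>z. h y * indicator {y} z) x)"
    by (simp add: lower_rate_op_positively_homogeneous[OF Q h_nonneg] sum.remove)
  also have "\<dots> \<le> Q h x"
    by (subst (2) h_expand) (rule lower_rate_op_sum_ge[OF Q finite])
  also have "\<dots> \<le> Q g x" by fact
  finally show ?thesis by (simp add: h_def mult.commute)
qed

lemma lower_rate_op_nonneg_at_argmin:
  fixes Q :: "('x::finite \<Rightarrow> real) \<Rightarrow> ('x \<Rightarrow> real)"
  assumes "lower_rate_op Q" and "\<And>z. g z \<ge> g x"
  shows "Q g x \<ge> 0"
  using lower_rate_op_ge_diagonal[of Q "g x" g x] assms by simp

lemma lower_semigroup_sol_continuous_on:
  "is_lower_semigroup_sol Q f T \<Longrightarrow> continuous_on {0..} (\<lambda>t. T t y)"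
  unfolding is_lower_semigroup_sol_def by (intro DERIV_continuous_on) auto

lemma lower_semigroup_sol_has_derivative_at:
  assumes "is_lower_semigroup_sol Q f T" and "t > 0"
  shows "((\<lambda>s. T s y) has_real_derivative Q (T t) y) (at t)"
proof -
  have "at t within {0..} = at t"
    using \<open>t > 0\<close> by (intro at_within_interior) auto
  moreover have "((\<lambda>s. T s y) has_real_derivative Q (T t) y) (at t within {0..})"
    using assms unfolding is_lower_semigroup_sol_def by simp
  ultimately show ?thesis by simp
qed

lemma first_zero_time:
  fixes h :: "'i::finite \<Rightarrow> real \<Rightarrow> real"
  assumes cont: "\<And>i. continuous_on {0..b} (h i)" and pos0: "\<And>i. h i 0 > 0"
    and "0 \<le> b" and "h j b \<le> 0"
  obtains s i where "0 < s" "h i s = 0" "\<And>k. h k s \<ge> 0"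
    "\<And>k r. 0 \<le> r \<Longrightarrow> r < s \<Longrightarrow> h k r > 0"
proof -
  define S where "S = (\<Union>i. {0..b} \<inter> h i -` {..0})"
  have "closed S"
    unfolding S_def using cont by (intro closed_UN ballI continuous_closed_preimage) auto
  moreover have "b \<in> S" using \<open>0 \<le> b\<close> \<open>h j b \<le> 0\<close> by (auto simp: S_def)
  moreover have bdd: "bdd_below S" unfolding S_def by (rule bdd_belowI[of _ 0]) auto
  ultimately have "Inf S \<in> S" using closed_contains_Inf by blast
  define s where "s = Inf S"
  have s_least: "s \<le> r" if "r \<in> S" for r unfolding s_def using cInf_lower[OF that bdd] .
  obtain i where i: "h i s \<le> 0" "0 \<le> s" "s \<le> b" using \<open>Inf S \<in> S\<close> by (auto simp: S_def s_def)
  have before: "h k r > 0" if "0 \<le> r" "r < s" for k r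
  proof (rule ccontr)
    assume "\<not> h k r > 0"
    with that i have "r \<in> S" by (auto simp: S_def not_less)
    with s_least \<open>r < s\<close> show False by fastforce
  qed
  have at_s: "h k s \<ge> 0" for k
  proof (rule ccontr)
    assume neg: "\<not> h k s \<ge> 0"
    have "continuous_on {0..s} (\<lambda>t. - h k t)"
      using cont[of k] i by (intro continuous_intros) (auto intro: continuous_on_subset)
    then obtain r where "0 \<le> r" "r \<le> s" "h k r = 0"
      using IVT'[of "\<lambda>t. - h k t" 0 0 s] neg pos0[of k] i by force
    then show False using before[of r k] neg by (cases "r = s") auto
  qed
  have "s \<noteq> 0" using i pos0[of i] by auto
  with i have "0 < s" "h i s = 0" using at_s[of i] by auto
  then show thesis using that at_s before by blast
qed

lemma lower_semigroup_sol_barrier: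
  fixes Q :: "('x::finite \<Rightarrow> real) \<Rightarrow> ('x \<Rightarrow> real)"
  assumes Q: "lower_rate_op Q" and sol: "is_lower_semigroup_sol Q f T"
    and f_ge: "\<And>y. f y \<ge> m" and "\<epsilon> > 0" and "t \<ge> 0"
  shows "T t y - m + \<epsilon> * (1 + t) > 0"
proof (rule ccontr)
  define h where "h z r = T r z - m + \<epsilon> * (1 + r)" for z r
  assume "\<not> ?thesis"
  then have "h y t \<le> 0" by (simp add: h_def)
  moreover have "continuous_on {0..t} (h z)" for z
    using lower_semigroup_sol_continuous_on[OF sol, of z] unfolding h_def
    by (intro continuous_intros) (auto intro: continuous_on_subset)
  moreover have "h z 0 > 0" for z
    using sol f_ge[of z] \<open>\<epsilon> > 0\<close> by (simp add: h_def is_lower_semigroup_sol_def add_pos_nonneg)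
  txt \<open>The drift \<open>\<epsilon> (1 + r)\<close> makes \<open>h i\<close> strictly increasing at its first zero \<open>s\<close>, so it was
    negative just before \<open>s\<close>.\<close>
  ultimately obtain s i where s: "0 < s" "h i s = 0" "\<And>k. h k s \<ge> 0"
    and before: "\<And>k r. 0 \<le> r \<Longrightarrow> r < s \<Longrightarrow> h k r > 0"
    using first_zero_time \<open>t \<ge> 0\<close> by metis
  have "T s z \<ge> T s i" for z using s(2) s(3)[of z] by (simp add: h_def)
  then have "Q (T s) i \<ge> 0" by (rule lower_rate_op_nonneg_at_argmin[OF Q])
  moreover have "(h i has_real_derivative Q (T s) i + \<epsilon>) (at s)"
    unfolding h_def[abs_def]
    using lower_semigroup_sol_has_derivative_at[OF sol \<open>s > 0\<close>]
    by (auto intro!: derivative_eq_intros)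
  ultimately obtain d where "d > 0" and decr: "\<And>r. r > 0 \<Longrightarrow> r < d \<Longrightarrow> h i (s - r) < h i s"
    using DERIV_pos_inc_left \<open>\<epsilon> > 0\<close> by (metis add_nonneg_pos)
  define r where "r = min d s / 2"
  have "r > 0" "r < d" "r \<le> s" using \<open>d > 0\<close> \<open>s > 0\<close> by (auto simp: r_def)
  then show False using decr[of r] before[of "s - r" i] s(2) by linarith
qed

lemma lower_semigroup_sol_ge_min:
  fixes Q :: "('x::finite \<Rightarrow> real) \<Rightarrow> ('x \<Rightarrow> real)"
  assumes "lower_rate_op Q" and "is_lower_semigroup_sol Q f T"
    and "\<And>y. f y \<ge> m" and "t \<ge> 0"
  shows "T t y \<ge> m"
proof (rule field_le_epsilon)
  fix e :: real assume "e > 0"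
  with \<open>t \<ge> 0\<close> have "e / (1 + t) > 0" by simp
  then have "T t y - m + e / (1 + t) * (1 + t) > 0"
    using lower_semigroup_sol_barrier[OF assms(1-3) _ \<open>t \<ge> 0\<close>] by blast
  with \<open>t \<ge> 0\<close> show "m \<le> T t y + e" by simp
qed

lemma lower_semigroup_sol_exp_lower_bound:
  fixes Q :: "('x::finite \<Rightarrow> real) \<Rightarrow> ('x \<Rightarrow> real)"
  assumes Q: "lower_rate_op Q" and sol: "is_lower_semigroup_sol Q f T"
    and f_ge: "\<And>y. f y \<ge> m" and "t \<ge> 0"
  shows "T t x - m \<ge> exp (Q (indicator {x}) x * t) * (f x - m)"
proof -
  define q where "q = Q (indicator {x}) x"
  define \<psi> where "\<psi> s = exp (- q * s) * (T s x - m)" for s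
  have T_ge: "T s z \<ge> m" if "s \<ge> 0" for s z
    using lower_semigroup_sol_ge_min[OF Q sol f_ge that] .
  have "\<psi> 0 \<le> \<psi> t"
  proof (rule DERIV_nonneg_imp_increasing_open[OF \<open>t \<ge> 0\<close>])
    show "continuous_on {0..t} \<psi>"
      using lower_semigroup_sol_continuous_on[OF sol, of x] unfolding \<psi>_def
      by (intro continuous_intros) (auto intro: continuous_on_subset)
  next
    fix s :: real assume s: "0 < s" "s < t"
    have "(\<psi> has_real_derivative exp (- q * s) * (Q (T s) x - q * (T s x - m))) (at s)"
      unfolding \<psi>_def[abs_def]
      using lower_semigroup_sol_has_derivative_at[OF sol \<open>s > 0\<close>]
      by (auto intro!: derivative_eq_intros simp: algebra_simps)
    moreover have "Q (T s) x \<ge> q * (T s x - m)"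
      unfolding q_def using lower_rate_op_ge_diagonal[OF Q] T_ge s by auto
    ultimately show "\<exists>y. (\<psi> has_real_derivative y) (at s) \<and> 0 \<le> y" by force
  qed
  then have "f x - m \<le> exp (- q * t) * (T t x - m)"
    using sol by (simp add: \<psi>_def is_lower_semigroup_sol_def)
  then show ?thesis
    by (simp add: q_def exp_minus field_simps)
qed

theorem lemma5:
  fixes Q :: "('x::finite \<Rightarrow> real) \<Rightarrow> ('x \<Rightarrow> real)"
    and f :: "'x \<Rightarrow> real" and x :: 'x and T :: "real \<Rightarrow> 'x \<Rightarrow> real"
  assumes "lower_rate_op Q"
    and "is_lower_semigroup_sol Q f T"
    and "f x > Min (range f)"
  shows "\<forall>t\<ge>0. T t x > Min (range f)"
proof (intro allI impI)
  fix t :: real assume "t \<ge> 0"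
  have "\<And>y. f y \<ge> Min (range f)" by simp
  then have "T t x - Min (range f) \<ge> exp (Q (indicator {x}) x * t) * (f x - Min (range f))"
    using lower_semigroup_sol_exp_lower_bound[OF assms(1,2) _ \<open>t \<ge> 0\<close>] by blast
  moreover have "exp (Q (indicator {x}) x * t) * (f x - Min (range f)) > 0"
    using assms(3) by simp
  ultimately show "T t x > Min (range f)" by linarith
qed

end
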